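(* $f_{2,2,1}(q^2,q,q)=J_{1}J_{2}$.
   Context: Let $q=e^{2\pi i\tau}$ with $\operatorname{Im}\tau>0$. For a positive integer $m$, $J_m:=\prod_{i\ge1}(1-q^{mi})$. For positive integers $a,b,c$ and $x,y\in\mathbb{C}^*$, the Hecke-type double-sum is $f_{a,b,c}(x,y,q):=\Big(\sum_{r,s\ge0}-\sum_{r,s<0}\Big)(-1)^{r+s}x^ry^sq^{a\binom{r}{2}+brs+c\binom{s}{2}}$. *)

theory Defs
  imports "HOL-Analysis.Analysis"
begin

definition choose2 :: "int \<Rightarrow> int" where
  "choose2 k = k * (k - 1) div 2"

definition J :: "complex \<Rightarrow> nat \<Rightarrow> complex" where
  "J q m = (\<Prod>i. (1 - q ^ (m * Suc i)))"

definition hecke_f :: "nat \<Rightarrow> nat \<Rightarrow> nat \<Rightarrow> complex \<Rightarrow> complex \<Rightarrow> complex \<Rightarrow> complex" where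
  "hecke_f a b c x y q =
     (let t = (\<lambda>(r::int, s::int). (-1) powi (r + s) * x powi r * y powi s *
                 q powi (int a * choose2 r + int b * r * s + int c * choose2 s))
      in infsum t {(r, s). r \<ge> 0 \<and> s \<ge> 0} - infsum t {(r, s). r < 0 \<and> s < 0})"

end

theory Submission
  imports Defs
begin

(* Substituting r = j, s = 2(m - j) + e on the quadrant r, s >= 0 and r = -j, s = -(2(m - j) + e + 1)
   on the quadrant r, s < 0, where j <= m and e is 0 or 1, turns f_{2,2,1}(q^2, q, q) into
   sum_m q^(m^2 + m) alpha_m with alpha_m = (1 - q^(2m+1)) sum_{|j| <= m} (-1)^j q^(m^2 - j^2).

   These alpha_m form a Bailey pair relative to q with beta_n = (-1)^n / (q^2;q^2)_n: a telescoping
   sum reduces sum_r alpha_r / ((q;q)_{n-r} (q;q)_{n+r+1}) to an alternating sum of Gaussian binomial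
   coefficients, which Gauss evaluated. Inserting Cauchy's identity
   sum_k q^(k^2 + a k) / ((q;q)_k (q;q)_{k+a}) = 1 / (q;q)_inf with a = 2m + 1 and summing the
   resulting absolutely convergent double series along its diagonals (Bailey's lemma) gives
   sum_m q^(m^2 + m) alpha_m / (q;q)_inf = sum_n (-1)^n q^(n^2 + n) / (q^2;q^2)_n,
   which is (q^2;q^2)_inf by Euler's identity. *)

definition qpoch :: "'a::comm_ring_1 \<Rightarrow> nat \<Rightarrow> 'a" where
  "qpoch x n = (\<Prod>i<n. 1 - x ^ Suc i)"

definition qpoch_inf :: "'a::{comm_ring_1, t2_space} \<Rightarrow> 'a" where
  "qpoch_inf x = prodinf (\<lambda>i. 1 - x ^ Suc i)"

definition qbinom :: "'a::field \<Rightarrow> nat \<Rightarrow> nat \<Rightarrow> 'a" where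
  "qbinom x n k = (if k \<le> n then qpoch x n / (qpoch x k * qpoch x (n - k)) else 0)"

(* (1 - x^(2m+1)) sum_{|j| <= m} (-1)^j x^(m^2 - j^2), with the sum split by the sign of j. *)
definition bailey_alpha :: "'a::comm_ring_1 \<Rightarrow> nat \<Rightarrow> 'a" where
  "bailey_alpha x m = (1 - x ^ (2 * m + 1)) *
     ((\<Sum>j\<le>m. (-1) ^ j * x ^ (m * m - j * j)) + (\<Sum>j=1..m. (-1) ^ j * x ^ (m * m - j * j)))"

(* Row r is x^(r^2+r) alpha_r times Cauchy's series with a = 2r + 1; along a diagonal r + k = n
   the powers of x combine to x^(n^2 + n). *)
definition bailey_term :: "'a::field \<Rightarrow> nat \<times> nat \<Rightarrow> 'a" where
  "bailey_term x = (\<lambda>(r, k). x ^ (r * r + r) * bailey_alpha x r *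
     (x ^ (k * k + (2 * r + 1) * k) / (qpoch x k * qpoch x (2 * r + 1 + k))))"

lemma qpoch_0 [simp]: "qpoch x 0 = 1"
  by (simp add: qpoch_def)

lemma qpoch_Suc: "qpoch x (Suc n) = qpoch x n * (1 - x ^ Suc n)"
  by (simp add: qpoch_def)

lemma qpoch_double: "qpoch x (2 * n) = (\<Prod>i<n. 1 - x ^ (2 * i + 1)) * qpoch (x ^ 2) n"
proof (induction n)
  case (Suc n)
  have "2 * Suc n = Suc (Suc (2 * n))" by simp
  with Suc.IH show ?case
    by (simp add: qpoch_Suc power_mult[symmetric] algebra_simps del: power_Suc)
qed simp

lemma qbinom_gt [simp]: "n < k \<Longrightarrow> qbinom x n k = 0"
  by (simp add: qbinom_def)

lemma qbinom_symmetric: "k \<le> n \<Longrightarrow> qbinom x n (n - k) = qbinom x n k"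
  by (simp add: qbinom_def mult.commute)

lemma Suc_choose_two: "Suc k choose 2 = (k choose 2) + k"
  by (simp add: numeral_2_eq_2)

lemma sum_triangle_swap:
  "(\<Sum>r\<le>n. \<Sum>j=a..r. f r j) = (\<Sum>j=a..n. \<Sum>r=j..(n::nat). f r j)"
proof -
  have "(\<Sum>r\<le>n. \<Sum>j=a..r. f r j)
      = (\<Sum>r\<le>n. \<Sum>j | j \<in> {..n} \<and> a \<le> j \<and> j \<le> r. f r j)"
    by (rule sum.cong) (auto intro: sum.cong)
  also have "\<dots> = (\<Sum>j\<le>n. \<Sum>r | r \<in> {..n} \<and> a \<le> j \<and> j \<le> r. f r j)"
    by (rule sum.swap_restrict) auto
  also have "\<dots> = (\<Sum>j\<le>n. if a \<le> j then \<Sum>r=j..n. f r j else 0)"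
    by (rule sum.cong) (auto intro: sum.cong)
  also have "\<dots> = (\<Sum>j | j \<in> {..n} \<and> a \<le> j. \<Sum>r=j..n. f r j)"
    by (rule sum.inter_filter[symmetric]) simp
  also have "{j. j \<in> {..n} \<and> a \<le> j} = {a..n}" by auto
  finally show ?thesis .
qed

lemma summable_norm_geometric_bound:
  fixes c :: "nat \<Rightarrow> 'a::real_normed_vector"
  assumes "0 \<le> t" "t < 1" "\<And>k. norm (c k) \<le> C * t ^ k"
  shows "summable (\<lambda>k. norm (c k))"
proof (rule summable_comparison_test')
  show "summable (\<lambda>k. C * t ^ k)" using assms(1,2) by (intro summable_mult summable_geometric) simp
qed (use assms in simp)

lemma summable_on_Sigma_dominated:
  fixes f :: "'a \<times> 'b \<Rightarrow> 'c::banach"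
  assumes "\<And>m. m \<in> A \<Longrightarrow> ((\<lambda>p. g (m, p)) has_sum G m) (B m)" and "G summable_on A"
    and "\<And>m p. m \<in> A \<Longrightarrow> p \<in> B m \<Longrightarrow> norm (f (m, p)) \<le> g (m, p)"
  shows "f summable_on Sigma A B"
proof -
  have "g summable_on Sigma A B"
    using assms by (intro summable_on_SigmaI[where g = G]) (auto intro: order.trans[OF norm_ge_zero])
  then have "(\<lambda>z. norm (f z)) summable_on Sigma A B"
    by (rule Infinite_Sum.abs_summable_on_comparison_test') (use assms(3) in auto)
  then show ?thesis by (rule Infinite_Sum.abs_summable_summable)
qed

context
  fixes x :: "'a::{real_normed_field, banach}"
  assumes norm_x: "norm x < 1"
begin

section \<open>Convergence of the q-Pochhammer symbol\<close>

lemma power_Suc_neq_one: "x ^ Suc i \<noteq> 1"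
proof
  assume "x ^ Suc i = 1"
  then have "norm x ^ Suc i = 1" by (metis norm_one norm_power)
  moreover have "norm x ^ Suc i < 1"
    using norm_x by (simp add: power_less_one_iff del: power_Suc)
  ultimately show False by simp
qed

lemma qpoch_nonzero: "qpoch x n \<noteq> 0"
  using power_Suc_neq_one by (auto simp: qpoch_def)

lemma summable_norm_power_Suc: "summable (\<lambda>i. norm x ^ Suc i)"
  using norm_x by (simp add: summable_geometric)

lemma convergent_prod_qpoch: "convergent_prod (\<lambda>i. 1 - x ^ Suc i)"
proof -
  have "summable (\<lambda>i. norm ((1 - x ^ Suc i) - 1))"
    using summable_norm_power_Suc by (simp add: norm_power del: power_Suc)
  then show ?thesis
    by (intro abs_convergent_prod_imp_convergent_prod summable_imp_abs_convergent_prod)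
qed

lemma qpoch_LIMSEQ: "qpoch x \<longlonglongrightarrow> qpoch_inf x"
  using convergent_prod_has_prod[OF convergent_prod_qpoch]
  unfolding qpoch_def qpoch_inf_def by (rule has_prod_imp_tendsto')

lemma qpoch_inf_nonzero: "qpoch_inf x \<noteq> 0"
  unfolding qpoch_inf_def
  by (rule prodinf_nonzero) (use convergent_prod_qpoch power_Suc_neq_one in auto)

(* The real product of the 1 - |x|^(i+1) is a positive lower bound. *)
lemma qpoch_norm_lower_bound:
  obtains L where "L > 0" "\<And>n. L \<le> norm (qpoch x n)"
proof
  define r where "r i = 1 - norm x ^ Suc i" for i
  have r_pos: "r i > 0" for i
    using norm_x unfolding r_def by (simp add: power_less_one_iff del: power_Suc)
  have "summable (\<lambda>i. norm (r i - 1))"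
    using summable_norm_power_Suc by (simp add: r_def del: power_Suc)
  then have r_prod: "convergent_prod r"
    by (intro abs_convergent_prod_imp_convergent_prod summable_imp_abs_convergent_prod)
  show "prodinf r > 0" by (rule less_0_prodinf[OF r_prod r_pos])
  fix n
  have "prodinf r \<le> prod r {..<n}"
    by (rule prod_ge_prodinf[OF convergent_prod_has_prod[OF r_prod]])
       (use r_pos in \<open>auto simp: r_def less_imp_le\<close>)
  also have "\<dots> \<le> (\<Prod>i<n. norm (1 - x ^ Suc i))"
  proof (rule prod_mono)
    fix i
    have "norm (1::'a) - norm (x ^ Suc i) \<le> norm (1 - x ^ Suc i)"
      by (rule norm_triangle_ineq2)
    then show "0 \<le> r i \<and> r i \<le> norm (1 - x ^ Suc i)"
      using r_pos[of i] by (simp add: r_def norm_power del: power_Suc)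
  qed
  also have "\<dots> = norm (qpoch x n)" by (simp add: qpoch_def prod_norm)
  finally show "prodinf r \<le> norm (qpoch x n)" .
qed

lemma norm_power_le: "m \<le> n \<Longrightarrow> norm (x ^ n) \<le> norm x ^ m"
  using norm_x by (simp add: norm_power power_decreasing)

section \<open>Gaussian binomial coefficients\<close>

lemma qbinom_0 [simp]: "qbinom x n 0 = 1"
  using qpoch_nonzero[of n] by (simp add: qbinom_def)

lemma qbinom_self [simp]: "qbinom x n n = 1"
  using qpoch_nonzero[of n] by (simp add: qbinom_def)

lemma qbinom_Suc_Suc: "qbinom x (Suc n) (Suc k) = x ^ Suc k * qbinom x n (Suc k) + qbinom x n k"
proof (cases "k < n")
  case True
  define d where "d = n - Suc k"
  define u v where "u = x ^ Suc k" and "v = x ^ Suc d"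
  have "Suc n = Suc k + Suc d" using True by (simp add: d_def)
  then have uv: "x ^ Suc n = u * v" unfolding u_def v_def by (simp only: power_add)
  have qpoch_Suc_uv: "qpoch x (Suc n) = qpoch x n * (1 - u * v)"
    "qpoch x (Suc k) = qpoch x k * (1 - u)" "qpoch x (Suc d) = qpoch x d * (1 - v)"
    by (simp_all only: qpoch_Suc uv flip: u_def v_def)
  have nonzero: "qpoch x n \<noteq> 0" "qpoch x k \<noteq> 0" "qpoch x d \<noteq> 0" "1 - u \<noteq> 0" "1 - v \<noteq> 0"
    using qpoch_nonzero power_Suc_neq_one by (auto simp: u_def v_def)
  have "qbinom x (Suc n) (Suc k) = qpoch x (Suc n) / (qpoch x (Suc k) * qpoch x (Suc d))"
    "qbinom x n (Suc k) = qpoch x n / (qpoch x (Suc k) * qpoch x d)"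
    "qbinom x n k = qpoch x n / (qpoch x k * qpoch x (Suc d))"
    using True by (simp_all add: qbinom_def d_def Suc_diff_Suc)
  moreover have "qpoch x n * (1 - u * v) / (qpoch x k * (1 - u) * (qpoch x d * (1 - v)))
      = u * (qpoch x n / (qpoch x k * (1 - u) * qpoch x d)) + qpoch x n / (qpoch x k * (qpoch x d * (1 - v)))"
  proof -
    have partial_fractions: "a * (u * V + U) / (b * U * (c * V)) = u * (a / (b * U * c)) + a / (b * (c * V))"
      if "b \<noteq> 0" "c \<noteq> 0" "U \<noteq> 0" "V \<noteq> 0" for a b c U V :: 'a
      using that by (simp add: field_simps)
    have "1 - u * v = u * (1 - v) + (1 - u)" by (simp add: algebra_simps)
    then show ?thesis by (simp only:) (rule partial_fractions; use nonzero in simp)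
  qed
  ultimately show ?thesis by (simp only: qpoch_Suc_uv u_def)
next
  case False
  then show ?thesis by (cases "k = n") auto
qed

lemma qbinom_Suc_Suc': "qbinom x (Suc n) (Suc k) = qbinom x n (Suc k) + x ^ (n - k) * qbinom x n k"
proof (cases "k < n")
  case True
  define d where "d = n - Suc k"
  have "n - k = Suc d" "Suc n - Suc k = Suc d" "n - Suc d = k" "n - d = Suc k"
    using True by (auto simp: d_def)
  then have "qbinom x (Suc n) (Suc k) = qbinom x (Suc n) (Suc d)"
    "qbinom x n (Suc d) = qbinom x n k" "qbinom x n d = qbinom x n (Suc k)"
    using True qbinom_symmetric by (metis Suc_leI d_def diff_le_self le_SucI less_imp_le)+
  with \<open>n - k = Suc d\<close> show ?thesis by (simp add: qbinom_Suc_Suc del: power_Suc)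
next
  case False
  then show ?thesis by (cases "k = n") auto
qed

lemma qbinom_absorb: "(1 - x ^ Suc k) * qbinom x (Suc n) (Suc k) = (1 - x ^ Suc n) * qbinom x n k"
proof (cases "k \<le> n")
  case True
  have "1 - x ^ Suc k \<noteq> 0" using power_Suc_neq_one by simp
  with True qpoch_nonzero show ?thesis
    by (simp add: qbinom_def qpoch_Suc field_simps del: power_Suc)
qed simp

theorem qbinomial_theorem: "(\<Sum>k\<le>n. qbinom x n k * x ^ (k choose 2) * z ^ k) = (\<Prod>i<n. 1 + z * x ^ i)"
proof (induction n arbitrary: z)
  case (Suc n)
  define S where "S z = (\<Sum>k\<le>n. qbinom x n k * x ^ (k choose 2) * z ^ k)" for z
  have shift: "(\<Sum>k\<le>Suc n. qbinom x m k * x ^ (k choose 2) * z ^ k)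
      = 1 + (\<Sum>k\<le>n. qbinom x m (Suc k) * x ^ (Suc k choose 2) * z ^ Suc k)" for m z
    by (subst sum.atMost_Suc_shift) (simp add: numeral_2_eq_2)
  have "(\<Sum>k\<le>Suc n. qbinom x (Suc n) k * x ^ (k choose 2) * z ^ k)
      = (1 + (\<Sum>k\<le>n. qbinom x n (Suc k) * x ^ (Suc k choose 2) * (x * z) ^ Suc k))
        + z * S (x * z)"
    unfolding shift qbinom_Suc_Suc S_def sum_distrib_left
    by (simp add: sum.distrib algebra_simps Suc_choose_two power_add power_mult_distrib del: power_Suc)
       (simp add: sum.distrib[symmetric] power_Suc algebra_simps)
  also have "1 + (\<Sum>k\<le>n. qbinom x n (Suc k) * x ^ (Suc k choose 2) * (x * z) ^ Suc k) = S (x * z)"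
    using shift[of n "x * z"] by (simp add: S_def)
  also have "S (x * z) + z * S (x * z) = (1 + z) * (\<Prod>i<n. 1 + (x * z) * x ^ i)"
    unfolding S_def Suc.IH by (simp add: algebra_simps)
  also have "\<dots> = (\<Prod>i<Suc n. 1 + z * x ^ i)"
    by (simp add: prod.lessThan_Suc_shift algebra_simps del: prod.lessThan_Suc)
  finally show ?case .
qed (simp add: binomial_eq_0)

lemma euler_finite: "(\<Sum>k\<le>n. (-1) ^ k * x ^ (Suc k choose 2) / (qpoch x k * qpoch x (n - k))) = 1"
proof -
  have "qpoch x n = (\<Sum>k\<le>n. qbinom x n k * x ^ (k choose 2) * (-x) ^ k)"
    by (simp add: qbinomial_theorem qpoch_def)
  also have "\<dots> = qpoch x n * (\<Sum>k\<le>n. (-1) ^ k * x ^ (Suc k choose 2) / (qpoch x k * qpoch x (n - k)))"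
    unfolding sum_distrib_left
    by (rule sum.cong) (auto simp: qbinom_def Suc_choose_two power_add power_minus' algebra_simps)
  finally show ?thesis using qpoch_nonzero[of n] by simp
qed

lemma cauchy_finite:
  "(\<Sum>k\<le>n. qbinom x n k * (x ^ (k * k + m * k) / qpoch x (m + k))) = 1 / qpoch x (m + n)"
proof (induction n arbitrary: m)
  case (Suc n)
  define G where "G k m = x ^ (k * k + m * k) / qpoch x (m + k)" for k m
  have G_Suc: "x ^ (n - k) * c * G (Suc k) m = x ^ (Suc m + n) * (c * G k (Suc m))" if "k \<le> n" for k c
  proof -
    have "(n - k) + (Suc k * Suc k + m * Suc k) = (Suc m + n) + (k * k + Suc m * k)"
      using that by (simp add: algebra_simps)
    then have "x ^ (n - k) * x ^ (Suc k * Suc k + m * Suc k) = x ^ (Suc m + n) * x ^ (k * k + Suc m * k)"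
      by (metis power_add)
    then show ?thesis unfolding G_def by (simp add: field_simps del: power_Suc)
  qed
  have shift: "(\<Sum>k\<le>Suc n. qbinom x m' k * G k m)
      = 1 / qpoch x m + (\<Sum>k\<le>n. qbinom x m' (Suc k) * G (Suc k) m)"
    for m'
    by (subst sum.atMost_Suc_shift) (simp add: G_def)
  have "(\<Sum>k\<le>Suc n. qbinom x (Suc n) k * G k m)
      = (1 / qpoch x m + (\<Sum>k\<le>n. qbinom x n (Suc k) * G (Suc k) m))
        + (\<Sum>k\<le>n. x ^ (n - k) * qbinom x n k * G (Suc k) m)"
    unfolding shift qbinom_Suc_Suc' by (simp add: sum.distrib algebra_simps)
  also have "1 / qpoch x m + (\<Sum>k\<le>n. qbinom x n (Suc k) * G (Suc k) m) = (\<Sum>k\<le>n. qbinom x n k * G k m)"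
    using shift[of n] by simp
  also have "(\<Sum>k\<le>n. x ^ (n - k) * qbinom x n k * G (Suc k) m)
      = x ^ (Suc m + n) * (\<Sum>k\<le>n. qbinom x n k * G k (Suc m))"
    unfolding sum_distrib_left by (rule sum.cong) (simp_all add: G_Suc)
  also have "(\<Sum>k\<le>n. qbinom x n k * G k m) = 1 / qpoch x (m + n)"
    using Suc.IH[of m] by (simp add: G_def)
  also have "(\<Sum>k\<le>n. qbinom x n k * G k (Suc m)) = 1 / qpoch x (Suc m + n)"
    using Suc.IH[of "Suc m"] by (simp add: G_def)
  also have "1 / qpoch x (m + n) + x ^ (Suc m + n) * (1 / qpoch x (Suc m + n)) = 1 / qpoch x (m + Suc n)"
  proof -
    have split_fraction: "1 / P + (1 - U) * (1 / (P * U)) = 1 / (P * U)" if "P \<noteq> 0" "U \<noteq> 0" for P U :: 'a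
      using that by (simp add: field_simps)
    have "1 - x ^ Suc (m + n) \<noteq> 0" using power_Suc_neq_one by simp
    from split_fraction[OF qpoch_nonzero this] show ?thesis by (simp add: qpoch_Suc del: power_Suc)
  qed
  finally show ?case by (simp add: G_def)
qed simp

lemma alternating_qbinom_sum_Suc_Suc:
  "(\<Sum>k\<le>Suc (Suc n). (-1) ^ k * qbinom x (Suc (Suc n)) k)
     = (1 - x ^ Suc n) * (\<Sum>k\<le>n. (-1) ^ k * qbinom x n k)"
proof -
  define G where "G n = (\<Sum>k\<le>n. (-1) ^ k * qbinom x n k)" for n
  define H where "H n = (\<Sum>k\<le>n. (-1) ^ k * x ^ k * qbinom x n k)" for n
  have "G (Suc (Suc n)) = 1 + (\<Sum>k\<le>Suc n. (-1) ^ Suc k * qbinom x (Suc (Suc n)) (Suc k))"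
    unfolding G_def by (subst sum.atMost_Suc_shift) (simp del: power_Suc sum.atMost_Suc)
  also have "\<dots> = (1 + (\<Sum>k\<le>Suc n. (-1) ^ Suc k * x ^ Suc k * qbinom x (Suc n) (Suc k))) - G (Suc n)"
    unfolding G_def qbinom_Suc_Suc[of "Suc n"] by (simp add: algebra_simps sum.distrib sum_subtractf sum_negf)
  also have "1 + (\<Sum>k\<le>Suc n. (-1) ^ Suc k * x ^ Suc k * qbinom x (Suc n) (Suc k)) = H (Suc n)"
    unfolding H_def by (subst (2) sum.atMost_Suc_shift) (simp del: power_Suc)
  also have "H (Suc n) - G (Suc n) = - (\<Sum>k\<le>Suc n. (-1) ^ k * (1 - x ^ k) * qbinom x (Suc n) k)"
    unfolding H_def G_def sum_negf[symmetric] sum_subtractf[symmetric]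
    by (rule sum.cong) (simp_all add: algebra_simps)
  also have "(\<Sum>k\<le>Suc n. (-1) ^ k * (1 - x ^ k) * qbinom x (Suc n) k)
      = (\<Sum>k\<le>n. (-1) ^ Suc k * ((1 - x ^ Suc k) * qbinom x (Suc n) (Suc k)))"
    by (subst sum.atMost_Suc_shift) (simp del: power_Suc sum.atMost_Suc add: mult.assoc)
  also have "\<dots> = - ((1 - x ^ Suc n) * G n)"
    unfolding qbinom_absorb G_def sum_distrib_left sum_negf[symmetric]
    by (rule sum.cong) (simp_all add: algebra_simps)
  finally show ?thesis unfolding G_def by simp
qed

lemma alternating_qbinom_sum_even:
  "(\<Sum>k\<le>2 * n. (-1) ^ k * qbinom x (2 * n) k) = (\<Prod>i<n. 1 - x ^ (2 * i + 1))"
proof (induction n)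
  case (Suc n)
  have "2 * Suc n = Suc (Suc (2 * n))" by simp
  then show ?case using alternating_qbinom_sum_Suc_Suc[of "2 * n"] Suc.IH by (simp del: power_Suc)
qed simp

lemma alternating_qpoch_convolution_even:
  "(\<Sum>k\<le>2 * n. (-1) ^ k / (qpoch x k * qpoch x (2 * n - k))) = 1 / qpoch (x ^ 2) n"
proof -
  have "qpoch x (2 * n) * (\<Sum>k\<le>2 * n. (-1) ^ k / (qpoch x k * qpoch x (2 * n - k)))
      = (\<Sum>k\<le>2 * n. (-1) ^ k * qbinom x (2 * n) k)"
    unfolding sum_distrib_left by (rule sum.cong) (auto simp: qbinom_def)
  also have "\<dots> = (\<Prod>i<n. 1 - x ^ (2 * i + 1))"
    by (rule alternating_qbinom_sum_even)
  finally show ?thesis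
    using qpoch_nonzero[of "2 * n"] unfolding qpoch_double by (auto simp: field_simps)
qed

section \<open>A Bailey pair\<close>

lemma bailey_telescope:
  assumes "j \<le> n"
  shows "(\<Sum>r=j..n. x ^ (r * r - j * j) * (1 - x ^ (2 * r + 1)) / (qpoch x (n - r) * qpoch x (Suc (n + r))))
     = 1 / (qpoch x (n - j) * qpoch x (n + j))"
  using assms
proof (induction j rule: inc_induct)
  case base
  have "1 - x ^ Suc (n + n) \<noteq> 0" using power_Suc_neq_one by simp
  with qpoch_nonzero show ?case by (simp add: qpoch_Suc mult_2 del: power_Suc)
next
  case (step j)
  define F where "F i r = x ^ (r * r - i * i) * (1 - x ^ (2 * r + 1)) / (qpoch x (n - r) * qpoch x (Suc (n + r)))"
    for i r
  define A B u v where "A = qpoch x (n - Suc j)" and "B = qpoch x (n + j)"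
    and "u = x ^ (2 * j + 1)" and "v = x ^ (n - j)"
  have "Suc (n + j) = (2 * j + 1) + (n - j)" using step.hyps by simp
  then have uv: "x ^ Suc (n + j) = u * v" unfolding u_def v_def by (metis power_add)
  have "n - j = Suc (n - Suc j)" using step.hyps by simp
  then have qpoch_A: "qpoch x (n - j) = A * (1 - v)" unfolding A_def v_def by (simp only: qpoch_Suc)
  have qpoch_B: "qpoch x (Suc (n + j)) = B * (1 - u * v)" "qpoch x (n + Suc j) = B * (1 - u * v)"
    unfolding B_def by (simp_all only: qpoch_Suc uv add_Suc_right)
  have nonzero: "A \<noteq> 0" "B \<noteq> 0" "1 - v \<noteq> 0" "1 - u * v \<noteq> 0"
    using qpoch_nonzero[of "n - j"] qpoch_nonzero[of "Suc (n + j)"] qpoch_A qpoch_B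
    by (auto simp: A_def B_def)
  have F_Suc: "F j r = u * F (Suc j) r" if "Suc j \<le> r" for r
  proof -
    have "Suc j * Suc j \<le> r * r" using that mult_le_mono by blast
    then have "r * r - j * j = (2 * j + 1) + (r * r - Suc j * Suc j)" by simp
    then show ?thesis unfolding F_def u_def by (simp only: power_add mult.assoc times_divide_eq_right)
  qed
  have "(\<Sum>r=j..n. F j r) = F j j + (\<Sum>r=Suc j..n. F j r)"
    using step.hyps by (simp add: sum.atLeast_Suc_atMost)
  also have "(\<Sum>r=Suc j..n. F j r) = u * (\<Sum>r=Suc j..n. F (Suc j) r)"
    unfolding sum_distrib_left by (rule sum.cong) (simp_all add: F_Suc)
  also have "\<dots> = u * (1 / (A * (B * (1 - u * v))))"
    using step.IH unfolding F_def[symmetric] qpoch_B A_def by simp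
  also have "F j j = (1 - u) / (A * (1 - v) * (B * (1 - u * v)))"
    unfolding F_def qpoch_A qpoch_B u_def by simp
  also have "(1 - u) / (A * (1 - v) * (B * (1 - u * v))) + u * (1 / (A * (B * (1 - u * v))))
      = 1 / (A * (1 - v) * B)"
  proof -
    have partial_fractions: "(1 - u) / (A * V * (B * W)) + u * (1 / (A * (B * W))) = 1 / (A * V * B)"
      if "V \<noteq> 0" "W \<noteq> 0" "W = (1 - u) + u * V" for V W
    proof -
      have "(1 - u) / (A * V * (B * W)) + u * (1 / (A * (B * W))) = ((1 - u) + u * V) / (A * V * (B * W))"
        using that(1,2) nonzero(1,2) by (simp add: field_simps)
      then show ?thesis using that nonzero by simp
    qed
    show ?thesis by (rule partial_fractions) (use nonzero in \<open>simp_all add: algebra_simps\<close>)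
  qed
  finally show ?case unfolding F_def qpoch_A B_def .
qed

lemma bailey_pair:
  "(\<Sum>r\<le>n. bailey_alpha x r / (qpoch x (n - r) * qpoch x (Suc (n + r)))) = (-1) ^ n / qpoch (x ^ 2) n"
proof -
  define g where "g r j = (-1) ^ j * (x ^ (r * r - j * j) * (1 - x ^ (2 * r + 1))
      / (qpoch x (n - r) * qpoch x (Suc (n + r))))" for r j
  define c where "c j = (-1) ^ j / (qpoch x (n - j) * qpoch x (n + j))" for j
  have inner: "(\<Sum>r=j..n. g r j) = c j" if "j \<le> n" for j
    unfolding g_def c_def sum_distrib_left[symmetric] bailey_telescope[OF that] by simp
  have "(\<Sum>r\<le>n. bailey_alpha x r / (qpoch x (n - r) * qpoch x (Suc (n + r))))
      = (\<Sum>r\<le>n. \<Sum>j=0..r. g r j) + (\<Sum>r\<le>n. \<Sum>j=1..r. g r j)"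
    unfolding bailey_alpha_def g_def atMost_atLeast0 sum.distrib[symmetric]
    by (rule sum.cong) (simp_all add: sum_distrib_left sum_divide_distrib distrib_left add_divide_distrib
        algebra_simps)
  also have "\<dots> = (\<Sum>j\<le>n. c j) + (\<Sum>j=1..n. c j)"
    unfolding sum_triangle_swap by (simp add: inner atMost_atLeast0)
  finally have alpha_side: "(\<Sum>r\<le>n. bailey_alpha x r / (qpoch x (n - r) * qpoch x (Suc (n + r))))
      = (\<Sum>j\<le>n. c j) + (\<Sum>j=1..n. c j)" .
  \<comment> \<open>Gauss's sum, split at \<open>k = n\<close>, gives the same two sums over \<open>j = |k - n|\<close>.\<close>
  define h where "h k = (-1) ^ k / (qpoch x k * qpoch x (2 * n - k))" for k
  have sign: "(-1::'a) ^ (n - j) = (-1) ^ n * (-1) ^ j" if "j \<le> n" for j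
  proof -
    have "(-1::'a) ^ n * (-1) ^ j = (-1) ^ (n - j) * ((-1) ^ j * (-1) ^ j)"
      using that by (metis le_add_diff_inverse2 mult.assoc power_add)
    then show ?thesis by (simp flip: power_add)
  qed
  have "1 / qpoch (x ^ 2) n = (\<Sum>k\<le>2 * n. h k)"
    unfolding h_def alternating_qpoch_convolution_even ..
  also have "\<dots> = (\<Sum>k=0..n. h k) + (\<Sum>k=n + 1..n + n. h k)"
    using sum.ub_add_nat[of 0 n h n] by (simp add: atMost_atLeast0 mult_2)
  also have "(\<Sum>k=0..n. h k) = (\<Sum>k=0..n. h (n + 0 - k))"
    by (rule sum.atLeastAtMost_rev)
  also have "\<dots> = (-1) ^ n * (\<Sum>j\<le>n. c j)"
    unfolding sum_distrib_left atMost_atLeast0 by (rule sum.cong) (auto simp: h_def c_def sign)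
  also have "(\<Sum>k=n + 1..n + n. h k) = (\<Sum>k=1..n. h (k + n))"
    using sum.shift_bounds_cl_nat_ivl[of h 1 n n] by (simp add: add.commute)
  also have "\<dots> = (-1) ^ n * (\<Sum>j=1..n. c j)"
    unfolding sum_distrib_left by (rule sum.cong) (auto simp: h_def c_def power_add ac_simps)
  finally have "1 / qpoch (x ^ 2) n = (-1) ^ n * ((\<Sum>j\<le>n. c j) + (\<Sum>j=1..n. c j))"
    by (simp add: distrib_left)
  then have "(-1) ^ n / qpoch (x ^ 2) n = ((-1) ^ n * (-1) ^ n) * ((\<Sum>j\<le>n. c j) + (\<Sum>j=1..n. c j))"
    by (metis mult.assoc times_divide_eq_right mult.right_neutral)
  then show ?thesis unfolding alpha_side by (simp flip: power_add)
qed

section \<open>The series of Euler and Cauchy\<close>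

lemma tannery_qpoch_convolution:
  assumes conv: "(\<lambda>n. \<Sum>k\<le>n. c k / qpoch x (n - k)) \<longlonglongrightarrow> l"
    and summable_c: "summable (\<lambda>k. norm (c k))"
  shows "(\<lambda>k. c k / qpoch_inf x) sums l"
proof -
  obtain L where L: "L > 0" "\<And>n. L \<le> norm (qpoch x n)" using qpoch_norm_lower_bound by blast
  define a where "a k n = (if k \<le> n then c k / qpoch x (n - k) else 0)" for k n
  have lim: "(\<lambda>n. a k n) \<longlonglongrightarrow> c k / qpoch_inf x" for k
  proof -
    have "(\<lambda>n. qpoch x (n - k)) \<longlonglongrightarrow> qpoch_inf x"
      using filterlim_compose[OF qpoch_LIMSEQ filterlim_minus_const_nat_at_top] by (simp add: o_def)
    then have "(\<lambda>n. c k / qpoch x (n - k)) \<longlonglongrightarrow> c k / qpoch_inf x"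
      by (intro tendsto_intros qpoch_inf_nonzero)
    moreover have "eventually (\<lambda>n. c k / qpoch x (n - k) = a k n) sequentially"
      using eventually_ge_at_top[of k] by eventually_elim (simp add: a_def)
    ultimately show ?thesis using Lim_transform_eventually by blast
  qed
  have bound: "norm (a k n) \<le> norm (c k) / L" for k n
  proof (cases "k \<le> n")
    case True
    have "norm (c k) / norm (qpoch x (n - k)) \<le> norm (c k) / L"
      using L by (intro divide_left_mono) (auto intro: mult_pos_pos order.strict_trans2)
    with True show ?thesis by (simp add: a_def norm_divide)
  qed (use L in \<open>simp add: a_def\<close>)
  have "(\<lambda>n. suminf (\<lambda>k. a k n)) \<longlonglongrightarrow> suminf (\<lambda>k. c k / qpoch_inf x)"
    and summable: "summable (\<lambda>k. norm (c k / qpoch_inf x))"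
    using tannerys_theorem[of a "\<lambda>k. c k / qpoch_inf x" sequentially "\<lambda>k. norm (c k) / L", OF lim]
      bound summable_c by (auto intro: always_eventually summable_divide)
  moreover have "suminf (\<lambda>k. a k n) = (\<Sum>k\<le>n. c k / qpoch x (n - k))" for n
  proof -
    have "suminf (\<lambda>k. a k n) = (\<Sum>k\<le>n. a k n)"
      by (rule suminf_finite) (auto simp: a_def)
    then show ?thesis by (simp add: a_def)
  qed
  ultimately have "l = suminf (\<lambda>k. c k / qpoch_inf x)"
    using conv LIMSEQ_unique by auto
  with summable_norm_cancel[OF summable] show ?thesis by (simp add: summable_sums)
qed

lemma euler_series: "(\<lambda>k. (-1) ^ k * x ^ (Suc k choose 2) / qpoch x k) sums qpoch_inf x"
proof -
  obtain L where L: "L > 0" "\<And>n. L \<le> norm (qpoch x n)" using qpoch_norm_lower_bound by blast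
  have "(\<lambda>k. (-1) ^ k * x ^ (Suc k choose 2) / qpoch x k / qpoch_inf x) sums 1"
  proof (rule tannery_qpoch_convolution)
    show "(\<lambda>n. \<Sum>k\<le>n. (-1) ^ k * x ^ (Suc k choose 2) / qpoch x k / qpoch x (n - k)) \<longlonglongrightarrow> 1"
      using euler_finite by (simp add: field_simps)
    show "summable (\<lambda>k. norm ((-1) ^ k * x ^ (Suc k choose 2) / qpoch x k))"
    proof (rule summable_norm_geometric_bound)
      fix k
      have "norm (x ^ (Suc k choose 2)) / norm (qpoch x k) \<le> norm x ^ k / L"
        using L by (intro frac_le norm_power_le) (auto simp: Suc_choose_two)
      then show "norm ((-1) ^ k * x ^ (Suc k choose 2) / qpoch x k) \<le> (1 / L) * norm x ^ k"
        by (simp add: norm_divide norm_mult norm_power)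
    qed (use norm_x in simp_all)
  qed
  then show ?thesis
    using sums_mult2[where c = "qpoch_inf x"] qpoch_inf_nonzero by fastforce
qed

lemma cauchy_series: "(\<lambda>k. x ^ (k * k + m * k) / (qpoch x k * qpoch x (m + k))) sums (1 / qpoch_inf x)"
proof -
  obtain L where L: "L > 0" "\<And>n. L \<le> norm (qpoch x n)" using qpoch_norm_lower_bound by blast
  have "(\<lambda>k. x ^ (k * k + m * k) / (qpoch x k * qpoch x (m + k)) / qpoch_inf x)
      sums (1 / (qpoch_inf x * qpoch_inf x))"
  proof (rule tannery_qpoch_convolution)
    have "(\<Sum>k\<le>n. x ^ (k * k + m * k) / (qpoch x k * qpoch x (m + k)) / qpoch x (n - k))
        = 1 / (qpoch x n * qpoch x (m + n))" for n
    proof -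
      have "qpoch x n * (\<Sum>k\<le>n. x ^ (k * k + m * k) / (qpoch x k * qpoch x (m + k)) / qpoch x (n - k))
          = (\<Sum>k\<le>n. qbinom x n k * (x ^ (k * k + m * k) / qpoch x (m + k)))"
        unfolding sum_distrib_left by (rule sum.cong) (auto simp: qbinom_def)
      then show ?thesis
        unfolding cauchy_finite using qpoch_nonzero[of n] qpoch_nonzero[of "m + n"] by (simp add: field_simps)
    qed
    moreover have "(\<lambda>n. 1 / (qpoch x n * qpoch x (m + n))) \<longlonglongrightarrow> 1 / (qpoch_inf x * qpoch_inf x)"
      using LIMSEQ_ignore_initial_segment[OF qpoch_LIMSEQ, of m] qpoch_LIMSEQ qpoch_inf_nonzero
      by (intro tendsto_intros) (auto simp: add.commute)
    ultimately show "(\<lambda>n. \<Sum>k\<le>n. x ^ (k * k + m * k) / (qpoch x k * qpoch x (m + k)) / qpoch x (n - k))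
        \<longlonglongrightarrow> 1 / (qpoch_inf x * qpoch_inf x)" by simp
    show "summable (\<lambda>k. norm (x ^ (k * k + m * k) / (qpoch x k * qpoch x (m + k))))"
    proof (rule summable_norm_geometric_bound)
      fix k
      have "norm (x ^ (k * k + m * k)) / (norm (qpoch x k) * norm (qpoch x (m + k))) \<le> norm x ^ k / (L * L)"
        using L by (intro frac_le norm_power_le mult_mono) (auto intro: trans_le_add1 simp: le_square)
      then show "norm (x ^ (k * k + m * k) / (qpoch x k * qpoch x (m + k))) \<le> (1 / (L * L)) * norm x ^ k"
        by (simp add: norm_divide norm_mult)
    qed (use norm_x in simp_all)
  qed
  then show ?thesis
    using sums_mult2[where c = "qpoch_inf x"] qpoch_inf_nonzero by fastforce
qed

section \<open>Bailey's lemma\<close>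

lemma norm_bailey_alpha_le: "norm (bailey_alpha x m) \<le> 4 * real (Suc m)"
proof -
  define S1 S2 where "S1 = (\<Sum>j\<le>m. (-1) ^ j * x ^ (m * m - j * j))"
    and "S2 = (\<Sum>j=1..m. (-1) ^ j * x ^ (m * m - j * j))"
  have summand_le: "norm ((-1) ^ j * x ^ (m * m - j * j)) \<le> 1" for j
    using norm_x by (simp add: norm_mult norm_power power_le_one)
  have "norm S1 \<le> (\<Sum>j\<le>m. 1)" "norm S2 \<le> (\<Sum>j=1..m. 1)"
    unfolding S1_def S2_def using summand_le by (intro sum_norm_le; simp)+
  then have "norm (S1 + S2) \<le> 2 * real (Suc m)"
    using norm_triangle_ineq[of S1 S2] by simp
  moreover have "norm (1 - x ^ (2 * m + 1)) \<le> 2"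
    using norm_triangle_ineq4[of 1 "x ^ (2 * m + 1)"] norm_power_le[of 0 "2 * m + 1"] by simp
  ultimately have "norm (1 - x ^ (2 * m + 1)) * norm (S1 + S2) \<le> 2 * (2 * real (Suc m))"
    by (intro mult_mono) auto
  then show ?thesis unfolding bailey_alpha_def S1_def [symmetric] S2_def [symmetric] norm_mult by simp
qed

lemma norm_bailey_term_le:
  obtains C where "C \<ge> 0" "\<And>r k. norm (bailey_term x (r, k)) \<le> C * (real (Suc r) * norm x ^ r) * norm x ^ k"
proof -
  obtain L where L: "L > 0" "\<And>n. L \<le> norm (qpoch x n)" using qpoch_norm_lower_bound by blast
  have "norm (bailey_term x (r, k)) \<le> 4 / (L * L) * (real (Suc r) * norm x ^ r) * norm x ^ k" for r k
  proof -
    have "norm (x ^ (r * r + r)) * norm (bailey_alpha x r) \<le> norm x ^ r * (4 * real (Suc r))"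
      by (intro mult_mono norm_power_le norm_bailey_alpha_le) auto
    moreover have "norm (x ^ (k * k + (2 * r + 1) * k)) / (norm (qpoch x k) * norm (qpoch x (2 * r + 1 + k)))
        \<le> norm x ^ k / (L * L)"
      using L by (intro frac_le norm_power_le mult_mono) auto
    ultimately have "norm (x ^ (r * r + r)) * norm (bailey_alpha x r) *
        (norm (x ^ (k * k + (2 * r + 1) * k)) / (norm (qpoch x k) * norm (qpoch x (2 * r + 1 + k))))
        \<le> norm x ^ r * (4 * real (Suc r)) * (norm x ^ k / (L * L))"
      by (rule mult_mono) auto
    then show ?thesis by (simp add: bailey_term_def norm_mult norm_divide algebra_simps)
  qed
  with L show ?thesis by (intro that[of "4 / (L * L)"]) auto
qed

lemma summable_on_bailey_term: "bailey_term x summable_on UNIV"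
proof -
  obtain C where C: "C \<ge> 0" "\<And>r k. norm (bailey_term x (r, k)) \<le> C * (real (Suc r) * norm x ^ r) * norm x ^ k"
    using norm_bailey_term_le by blast
  define t where "t = norm x"
  have t: "0 \<le> t" "t < 1" using norm_x by (auto simp: t_def)
  have "bailey_term x summable_on Sigma UNIV (\<lambda>_. UNIV)"
  proof (rule summable_on_Sigma_dominated[where g = "\<lambda>(r, k). C * (real (Suc r) * t ^ r) * t ^ k"
        and G = "\<lambda>r. C * (real (Suc r) * t ^ r) / (1 - t)"])
    fix r
    have "(\<lambda>k. C * (real (Suc r) * t ^ r) * t ^ k) sums (C * (real (Suc r) * t ^ r) * (1 / (1 - t)))"
      by (intro sums_mult geometric_sums) (use t in auto)
    then show "((\<lambda>k. case (r, k) of (r, k) \<Rightarrow> C * (real (Suc r) * t ^ r) * t ^ k)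
        has_sum (C * (real (Suc r) * t ^ r) / (1 - t))) UNIV"
      using t C by (intro sums_nonneg_imp_has_sum) auto
  next
    have "summable (\<lambda>r. C * (real (Suc r) * t ^ r) / (1 - t))"
      using geometric_deriv_sums[of t] t by (intro summable_divide summable_mult sums_summable) auto
    then show "(\<lambda>r. C * (real (Suc r) * t ^ r) / (1 - t)) summable_on UNIV"
      using t C by (intro norm_summable_imp_summable_on) simp
  qed (use C in \<open>simp add: t_def\<close>)
  then show ?thesis by simp
qed

lemma bailey_term_row_has_sum:
  "((\<lambda>k. bailey_term x (r, k)) has_sum (x ^ (r * r + r) * bailey_alpha x r / qpoch_inf x)) UNIV"
proof (rule norm_summable_imp_has_sum)
  obtain C where C: "C \<ge> 0" "\<And>r k. norm (bailey_term x (r, k)) \<le> C * (real (Suc r) * norm x ^ r) * norm x ^ k"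
    using norm_bailey_term_le by blast
  show "summable (\<lambda>k. norm (bailey_term x (r, k)))"
    by (rule summable_norm_geometric_bound[OF _ norm_x C(2)]) simp
  show "(\<lambda>k. bailey_term x (r, k)) sums (x ^ (r * r + r) * bailey_alpha x r / qpoch_inf x)"
    using sums_mult[OF cauchy_series[of "2 * r + 1"], of "x ^ (r * r + r) * bailey_alpha x r"]
    by (simp add: bailey_term_def)
qed

lemma bailey_term_diagonal:
  "(\<Sum>r\<le>n. bailey_term x (r, n - r)) = (-1) ^ n * (x ^ 2) ^ (Suc n choose 2) / qpoch (x ^ 2) n"
proof -
  have "(\<Sum>r\<le>n. bailey_term x (r, n - r))
      = x ^ (n * n + n) * (\<Sum>r\<le>n. bailey_alpha x r / (qpoch x (n - r) * qpoch x (Suc (n + r))))"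
    unfolding sum_distrib_left
  proof (rule sum.cong)
    fix r assume "r \<in> {..n}"
    then obtain d where "n = r + d" using le_Suc_ex by auto
    then have "r * r + r + ((n - r) * (n - r) + (2 * r + 1) * (n - r)) = n * n + n"
      and "2 * r + 1 + (n - r) = Suc (n + r)"
      by (simp_all add: algebra_simps)
    then show "bailey_term x (r, n - r)
        = x ^ (n * n + n) * (bailey_alpha x r / (qpoch x (n - r) * qpoch x (Suc (n + r))))"
      unfolding bailey_term_def by (simp add: field_simps flip: power_add)
  qed simp
  also have "x ^ (n * n + n) = (x ^ 2) ^ (Suc n choose 2)"
  proof -
    have "2 * (Suc n choose 2) = n * n + n" by (induction n) (auto simp: Suc_choose_two)
    then show ?thesis by (metis power_mult)
  qed
  finally show ?thesis by (simp add: bailey_pair)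
qed

end

theorem bailey_lemma_series:
  fixes x :: "'a::{real_normed_field, banach}"
  assumes norm_x: "norm x < 1"
  shows "((\<lambda>m. x ^ (m * m + m) * bailey_alpha x m) has_sum (qpoch_inf x * qpoch_inf (x ^ 2))) UNIV"
proof -
  have norm_x2: "norm (x ^ 2) < 1" using norm_x by (simp add: norm_power power_less_one_iff)
  define X where "X = infsum (bailey_term x) UNIV"
  have X: "(bailey_term x has_sum X) (Sigma UNIV (\<lambda>_. UNIV))"
    using summable_on_bailey_term[OF norm_x] unfolding X_def by simp
  have rows: "((\<lambda>r. x ^ (r * r + r) * bailey_alpha x r / qpoch_inf x) has_sum X) UNIV"
    by (rule has_sum_Sigma[OF isUCont_plus X]) (rule bailey_term_row_has_sum[OF norm_x])
  have "((\<lambda>(n, r). bailey_term x (r, n - r)) has_sum X) (Sigma UNIV (\<lambda>n. {..n}))"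
    using X by (subst has_sum_reindex_bij_witness[where i="\<lambda>(r, k). (r + k, r)" and j="\<lambda>(n, r). (r, n - r)"])
      auto
  then have "((\<lambda>n. \<Sum>r\<le>n. bailey_term x (r, n - r)) has_sum X) UNIV"
    by (rule has_sum_Sigma[OF isUCont_plus]) auto
  then have "(\<lambda>n. (-1) ^ n * (x ^ 2) ^ (Suc n choose 2) / qpoch (x ^ 2) n) sums X"
    unfolding bailey_term_diagonal[OF norm_x] by (rule has_sum_imp_sums)
  then have "X = qpoch_inf (x ^ 2)"
    using euler_series[OF norm_x2] sums_unique2 by blast
  with has_sum_cmult_right[OF rows, of "qpoch_inf x"] show ?thesis
    using qpoch_inf_nonzero[OF norm_x] by (simp add: mult.commute)
qed

section \<open>The Hecke-type double sum\<close>

lemma two_choose2: "2 * choose2 k = k * (k - 1)"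
proof -
  have "even (k * (k - 1))" by auto
  then show ?thesis unfolding choose2_def by simp
qed

definition hecke_summand :: "complex \<Rightarrow> int \<times> int \<Rightarrow> complex" where
  "hecke_summand q = (\<lambda>(r, s). (-1) powi (r + s) * (q ^ 2) powi r * q powi s *
     q powi (int 2 * choose2 r + int 2 * r * s + int 1 * choose2 s))"

lemma hecke_f_eq_infsum_hecke_summand:
  "hecke_f 2 2 1 (q ^ 2) q q = infsum (hecke_summand q) {(r, s). r \<ge> 0 \<and> s \<ge> 0}
     - infsum (hecke_summand q) {(r, s). r < 0 \<and> s < 0}"
  unfolding hecke_f_def Let_def hecke_summand_def ..

lemma hecke_summand_eq:
  assumes "q \<noteq> 0"
  shows "hecke_summand q (r, s) = (-1) powi (r + s) * q powi (2 * r + s + 2 * choose2 r + 2 * r * s + choose2 s)"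
proof -
  have "(q ^ 2) powi r = q powi (2 * r)" by (simp add: power_int_power)
  moreover have "q powi (2 * r + s + 2 * choose2 r + 2 * r * s + choose2 s)
     = q powi (2 * r) * q powi s * q powi (2 * choose2 r + 2 * r * s + choose2 s)"
    using assms by (simp add: power_int_add[symmetric] add.assoc)
  ultimately show ?thesis by (simp add: hecke_summand_def mult.assoc)
qed

(* The summand at (r, s) = (j, 2(m - j) + e), and up to sign at (r, s) = (-j, -(2(m - j) + e + 1)). *)
definition reindexed_hecke_term :: "complex \<Rightarrow> nat \<times> nat \<times> nat \<Rightarrow> complex" where
  "reindexed_hecke_term q = (\<lambda>(m, j, e). (-1) ^ (j + e) * q ^ (m * m + m + (m * m - j * j) + e * (2 * m + 1)))"

lemma hecke_exponent_reindex:
  fixes j m e :: nat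
  assumes "j \<le> m" "e < 2"
  defines "T \<equiv> int (m * m + m + (m * m - j * j) + e * (2 * m + 1))"
  shows "2 * int j + int (2 * (m - j) + e) + 2 * choose2 (int j) + 2 * int j * int (2 * (m - j) + e)
      + choose2 (int (2 * (m - j) + e)) = T" (is ?nonneg)
    and "2 * - int j + - int (2 * (m - j) + e + 1) + 2 * choose2 (- int j)
      + 2 * - int j * - int (2 * (m - j) + e + 1) + choose2 (- int (2 * (m - j) + e + 1)) = T" (is ?neg)
proof -
  obtain d where m: "m = j + d" using assms(1) le_Suc_ex by blast
  then have d: "m - j = d" by simp
  have "m * m - j * j = 2 * j * d + d * d" unfolding m by (simp add: algebra_simps)
  then have T: "T = (int j + int d) * (int j + int d) + (int j + int d) + (2 * int j * int d + int d * int d)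
      + int e * (2 * (int j + int d) + 1)"
    by (simp add: T_def m algebra_simps)
  have ee: "int e * int e = int e" using assms(2) by (cases e) auto
  have c: "2 * choose2 (int (2 * d + e)) = (2 * int d + int e) * ((2 * int d + int e) - 1)"
    "2 * choose2 (- int (2 * d + e + 1)) = (- (2 * int d + int e + 1)) * ((- (2 * int d + int e + 1)) - 1)"
    using two_choose2[of "int (2 * d + e)"] two_choose2[of "- int (2 * d + e + 1)"] by simp_all
  have "2 * int j + (2 * int d + int e) + 2 * choose2 (int j) + 2 * int j * (2 * int d + int e)
      + choose2 (int (2 * d + e)) = T"
    using c(1) ee two_choose2[of "int j"] unfolding T by algebra
  then show ?nonneg unfolding d by simp
  have "2 * - int j + - (2 * int d + int e + 1) + 2 * choose2 (- int j)
      + 2 * - int j * - (2 * int d + int e + 1) + choose2 (- int (2 * d + e + 1)) = T"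
    using c(2) ee two_choose2[of "- int j"] unfolding T by algebra
  then show ?neg unfolding d by simp
qed

lemma hecke_summand_nonneg_reindex:
  assumes "q \<noteq> 0" "j \<le> m" "e < 2"
  shows "hecke_summand q (int j, int (2 * (m - j) + e)) = reindexed_hecke_term q (m, j, e)"
proof -
  have sum: "int j + int (2 * (m - j) + e) = int (j + e + 2 * (m - j))" by simp
  have sign: "(-1::complex) ^ (j + e + 2 * (m - j)) = (-1) ^ (j + e)"
    by (simp add: power_add power_mult)
  show ?thesis
    unfolding hecke_summand_eq[OF assms(1)] hecke_exponent_reindex(1)[OF assms(2,3)] sum
      power_int_of_nat sign reindexed_hecke_term_def by simp
qed

lemma hecke_summand_neg_reindex:
  assumes "q \<noteq> 0" "j \<le> m" "e < 2"
  shows "hecke_summand q (- int j, - int (2 * (m - j) + e + 1)) = - reindexed_hecke_term q (m, j, e)"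
proof -
  have sum: "- int j + - int (2 * (m - j) + e + 1) = - int (Suc (j + e + 2 * (m - j)))" by simp
  have "(-1::complex) powi (- int n) = (-1) ^ n" for n
  proof -
    have "(-1::complex) ^ n * (-1) ^ n = 1" by (simp flip: power_add)
    then show ?thesis by (simp add: power_int_minus inverse_unique)
  qed
  from this[of "Suc (j + e + 2 * (m - j))"]
  have sign: "(-1::complex) powi (- int (Suc (j + e + 2 * (m - j)))) = - ((-1) ^ (j + e))"
    by (simp only:) (simp add: power_add power_mult)
  show ?thesis
    unfolding hecke_summand_eq[OF assms(1)] hecke_exponent_reindex(2)[OF assms(2,3)] sum
      power_int_of_nat sign reindexed_hecke_term_def by simp
qed

lemma has_sum_reindexed_hecke_term:
  assumes q: "norm q < 1" and F: "\<And>m. F m \<subseteq> {..m} \<times> {..<2}"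
  defines "X \<equiv> infsum (reindexed_hecke_term q) (Sigma UNIV F)"
  shows "(reindexed_hecke_term q has_sum X) (Sigma UNIV F)"
    and "((\<lambda>m. \<Sum>p\<in>F m. reindexed_hecke_term q (m, p)) has_sum X) UNIV"
proof -
  define t where "t = norm q"
  have t: "0 \<le> t" "t < 1" using q by (auto simp: t_def)
  have fin: "finite (F m)" for m using F finite_subset by blast
  have card: "real (card (F m)) \<le> 2 * real (Suc m)" for m
    using card_mono[OF _ F[of m]] by (simp add: card_cartesian_product flip: of_nat_mult)
  have "reindexed_hecke_term q summable_on Sigma UNIV F"
  proof (rule summable_on_Sigma_dominated[where g = "\<lambda>(m, p). t ^ m" and G = "\<lambda>m. real (card (F m)) * t ^ m"])
    show "((\<lambda>p. case (m, p) of (m, p) \<Rightarrow> t ^ m) has_sum real (card (F m)) * t ^ m) (F m)" for m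
      by (rule has_sum_finiteI[OF fin]) simp
    have "summable (\<lambda>m. 2 * (real (Suc m) * t ^ m))"
      using geometric_deriv_sums[of t] t by (intro summable_mult sums_summable) auto
    moreover have "norm (real (card (F m)) * t ^ m) \<le> 2 * (real (Suc m) * t ^ m)" for m
      using mult_right_mono[OF card[of m], of "t ^ m"] t by (simp add: algebra_simps)
    ultimately have "summable (\<lambda>m. real (card (F m)) * t ^ m)"
      by (blast intro: summable_comparison_test')
    then show "(\<lambda>m. real (card (F m)) * t ^ m) summable_on UNIV"
      using t by (intro norm_summable_imp_summable_on) simp
    fix m :: nat and p :: "nat \<times> nat"
    obtain j e where p: "p = (j, e)" by fastforce
    have "norm (q ^ (m * m + m + (m * m - j * j) + e * (2 * m + 1))) \<le> t ^ m"
      unfolding t_def norm_power using q by (intro power_decreasing) auto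
    then show "norm (reindexed_hecke_term q (m, p)) \<le> (case (m, p) of (m, p) \<Rightarrow> t ^ m)"
      unfolding p
      by (simp add: reindexed_hecke_term_def norm_mult norm_power)
  qed
  then show Sigma: "(reindexed_hecke_term q has_sum X) (Sigma UNIV F)"
    unfolding X_def by simp
  show "((\<lambda>m. \<Sum>p\<in>F m. reindexed_hecke_term q (m, p)) has_sum X) UNIV"
    by (rule has_sum_Sigma'[OF Sigma]) (auto intro: has_sum_finiteI fin)
qed

lemma has_sum_hecke_summand_nonneg:
  assumes q: "q \<noteq> 0"
    and X: "(reindexed_hecke_term q has_sum X) (Sigma UNIV (\<lambda>m::nat. {..m} \<times> {..<2::nat}))"
  shows "(hecke_summand q has_sum X) {(r, s). r \<ge> 0 \<and> s \<ge> 0}"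
proof -
  have "(reindexed_hecke_term q has_sum X) (Sigma UNIV (\<lambda>m::nat. {..m} \<times> {..<2::nat}))
      = (hecke_summand q has_sum X) {(r, s). r \<ge> 0 \<and> s \<ge> 0}"
  proof (rule has_sum_reindex_bij_witness[where j="\<lambda>(m, j, e). (int j, int (2 * (m - j) + e))"
        and i="\<lambda>(r, s). (nat r + nat s div 2, nat r, nat s mod 2)"])
    fix a assume "a \<in> Sigma UNIV (\<lambda>m::nat. {..m} \<times> {..<2::nat})"
    then obtain m j e where a: "a = (m, j, e)" "j \<le> m" "e < 2" by auto
    then show "(\<lambda>(r, s). (nat r + nat s div 2, nat r, nat s mod 2))
        ((\<lambda>(m, j, e). (int j, int (2 * (m - j) + e))) a) = a"
      by (simp only: split nat_int) auto
    show "(\<lambda>(m, j, e). (int j, int (2 * (m - j) + e))) a \<in> {(r, s). r \<ge> 0 \<and> s \<ge> 0}" using a by auto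
    show "hecke_summand q ((\<lambda>(m, j, e). (int j, int (2 * (m - j) + e))) a) = reindexed_hecke_term q a"
      using a hecke_summand_nonneg_reindex[OF q] by simp
  next
    fix b assume "b \<in> {(r::int, s::int). r \<ge> 0 \<and> s \<ge> 0}"
    then obtain r s where b: "b = (r, s)" "r \<ge> 0" "s \<ge> 0" by auto
    have "int (2 * (nat s div 2) + nat s mod 2) = s" using b(3) by simp
    then have "2 * int (nat s div 2) + int (nat s mod 2) = s"
      by (simp only: of_nat_add of_nat_mult of_nat_numeral)
    then show "(\<lambda>(m, j, e). (int j, int (2 * (m - j) + e)))
        ((\<lambda>(r, s). (nat r + nat s div 2, nat r, nat s mod 2)) b) = b"
      using b by simp
    show "(\<lambda>(r, s). (nat r + nat s div 2, nat r, nat s mod 2)) b \<in> Sigma UNIV (\<lambda>m. {..m} \<times> {..<2})"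
      using b by auto
  qed simp
  with X show ?thesis by blast
qed

lemma has_sum_hecke_summand_neg:
  assumes q: "q \<noteq> 0"
    and X: "(reindexed_hecke_term q has_sum X) (Sigma UNIV (\<lambda>m::nat. {1..m} \<times> {..<2::nat}))"
  shows "(hecke_summand q has_sum - X) {(r, s). r < 0 \<and> s < 0}"
proof -
  have "(reindexed_hecke_term q has_sum X) (Sigma UNIV (\<lambda>m::nat. {1..m} \<times> {..<2::nat}))
      = ((\<lambda>p. - hecke_summand q p) has_sum X) {(r, s). r < 0 \<and> s < 0}"
  proof (rule has_sum_reindex_bij_witness[where j="\<lambda>(m, j, e). (- int j, - int (2 * (m - j) + e + 1))"
        and i="\<lambda>(r, s). (nat (-r) + (nat (-s) - 1) div 2, nat (-r), (nat (-s) - 1) mod 2)"])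
    fix a assume "a \<in> Sigma UNIV (\<lambda>m::nat. {1..m} \<times> {..<2::nat})"
    then obtain m j e where a: "a = (m, j, e)" "1 \<le> j" "j \<le> m" "e < 2" by auto
    then show "(\<lambda>(r, s). (nat (-r) + (nat (-s) - 1) div 2, nat (-r), (nat (-s) - 1) mod 2))
        ((\<lambda>(m, j, e). (- int j, - int (2 * (m - j) + e + 1))) a) = a"
      by (simp only: split minus_minus nat_int) auto
    show "(\<lambda>(m, j, e). (- int j, - int (2 * (m - j) + e + 1))) a \<in> {(r, s). r < 0 \<and> s < 0}"
      using a by auto
    show "- hecke_summand q ((\<lambda>(m, j, e). (- int j, - int (2 * (m - j) + e + 1))) a) = reindexed_hecke_term q a"
      using a hecke_summand_neg_reindex[OF q] by simp
  next
    fix b assume "b \<in> {(r::int, s::int). r < 0 \<and> s < 0}"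
    then obtain r s where b: "b = (r, s)" "r < 0" "s < 0" by auto
    have "int (2 * ((nat (-s) - 1) div 2) + (nat (-s) - 1) mod 2 + 1) = - s" using b(3) by simp
    then have "2 * int ((nat (-s) - 1) div 2) + int ((nat (-s) - 1) mod 2) + 1 = - s"
      by (simp only: of_nat_add of_nat_mult of_nat_numeral of_nat_1)
    then show "(\<lambda>(m, j, e). (- int j, - int (2 * (m - j) + e + 1)))
        ((\<lambda>(r, s). (nat (-r) + (nat (-s) - 1) div 2, nat (-r), (nat (-s) - 1) mod 2)) b) = b"
      using b by simp
    show "(\<lambda>(r, s). (nat (-r) + (nat (-s) - 1) div 2, nat (-r), (nat (-s) - 1) mod 2)) b
        \<in> Sigma UNIV (\<lambda>m. {1..m} \<times> {..<2})"
      using b by auto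
  qed simp
  with X show ?thesis using has_sum_uminus[of "hecke_summand q"] by fastforce
qed

lemma hecke_f_has_sum:
  assumes q1: "norm q < 1" and q0: "q \<noteq> 0"
  shows "((\<lambda>m. q ^ (m * m + m) * bailey_alpha q m) has_sum hecke_f 2 2 1 (q ^ 2) q q) UNIV"
proof -
  define XA XB
    where "XA = infsum (reindexed_hecke_term q) (Sigma UNIV (\<lambda>m::nat. {..m} \<times> {..<2::nat}))"
      and "XB = infsum (reindexed_hecke_term q) (Sigma UNIV (\<lambda>m::nat. {1..m} \<times> {..<2::nat}))"
  have "{..m} \<times> {..<2} \<subseteq> {..m} \<times> {..<2::nat}" "{1..m} \<times> {..<2} \<subseteq> {..m} \<times> {..<2::nat}"
    for m
    by auto
  note A = has_sum_reindexed_hecke_term[OF q1 this(1), folded XA_def]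
    and B = has_sum_reindexed_hecke_term[OF q1 this(2), folded XB_def]
  have "hecke_f 2 2 1 (q ^ 2) q q = XA + XB"
    unfolding hecke_f_eq_infsum_hecke_summand
      infsumI[OF has_sum_hecke_summand_nonneg[OF q0 A(1)]]
      infsumI[OF has_sum_hecke_summand_neg[OF q0 B(1)]] by simp
  moreover have "((\<lambda>m. (\<Sum>p\<in>{..m} \<times> {..<2}. reindexed_hecke_term q (m, p))
      + (\<Sum>p\<in>{1..m} \<times> {..<2}. reindexed_hecke_term q (m, p))) has_sum (XA + XB)) UNIV"
    using A(2) B(2) by (intro has_sum_add) auto
  moreover have "(\<Sum>p\<in>{..m} \<times> {..<2}. reindexed_hecke_term q (m, p))
      + (\<Sum>p\<in>{1..m} \<times> {..<2}. reindexed_hecke_term q (m, p)) = q ^ (m * m + m) * bailey_alpha q m" for m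
  proof -
    have pair: "reindexed_hecke_term q (m, j, 0) + reindexed_hecke_term q (m, j, 1)
        = q ^ (m * m + m) * ((1 - q ^ (2 * m + 1)) * ((-1) ^ j * q ^ (m * m - j * j)))" for j
      by (simp add: reindexed_hecke_term_def power_add algebra_simps power_mult power2_eq_square)
    have "(\<Sum>p\<in>A \<times> {..<2}. reindexed_hecke_term q (m, p))
        = (\<Sum>j\<in>A. reindexed_hecke_term q (m, j, 0) + reindexed_hecke_term q (m, j, 1))" for A
      unfolding sum.cartesian_product' by (simp add: numeral_2_eq_2 lessThan_Suc add.commute)
    then show ?thesis
      unfolding pair bailey_alpha_def distrib_left sum_distrib_left
      by (intro arg_cong2[where f = "(+)"] sum.cong) (auto simp: algebra_simps)
  qed
  ultimately show ?thesis by simp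
qed

theorem mainTheorem8:
  fixes \<tau> :: complex and q :: complex
  assumes "Im \<tau> > 0"
    and "q = exp (2 * pi * \<i> * \<tau>)"
  shows "hecke_f 2 2 1 (q ^ 2) q q = J q 1 * J q 2"
proof -
  have "norm q = exp (- 2 * pi * Im \<tau>)" using assms(2) by (simp add: norm_exp_eq_Re)
  then have q1: "norm q < 1" using assms(1) by simp
  have q0: "q \<noteq> 0" using assms(2) by simp
  have "hecke_f 2 2 1 (q ^ 2) q q = qpoch_inf q * qpoch_inf (q ^ 2)"
    using has_sum_unique[OF hecke_f_has_sum[OF q1 q0] bailey_lemma_series[OF q1]] .
  moreover have "J q m = qpoch_inf (q ^ m)" for m
    unfolding J_def qpoch_inf_def power_mult ..
  ultimately show ?thesis by simp
qed
end
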